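(* $\mathfrak{F}\models_{\mathbf{K}\mathsf{G}^2}\phi$ iff for any model $\mathfrak{M}$ on $\mathfrak{F}$ and any $w\in\mathfrak{F}$, $v_1(\phi,w)=1$.
   Context: The language $\mathsf{bi}\mathcal{L}^\neg_{\Box,\lozenge}$ is given by $\phi ::= p\mid\neg\phi\mid\phi\wedge\phi\mid\phi\vee\phi\mid\phi\rightarrow\phi\mid\phi\ominus\phi\mid\Box\phi\mid\lozenge\phi$, where $\ominus$ denotes the Gödel coimplication. On $[0,1]$: $a\wedge_\mathsf{G}b=\min(a,b)$, $a\vee_\mathsf{G}b=\max(a,b)$, $a\rightarrow_\mathsf{G}b=1$ if $a\le b$ and $b$ otherwise, $b\ominus_\mathsf{G}a=0$ if $b\le a$ and $b$ otherwise. A $\mathbf{K}\mathsf{G}^2$ model is $\mathfrak{M}=\langle W,R,v_1,v_2\rangle$ with $\langle W,R\rangle$ a crisp frame ($R\subseteq W\times W$) and $v_1,v_2:\mathsf{Var}\times W\to[0,1]$, extended by: $v_1(\neg\phi)=v_2(\phi)$, $v_2(\neg\phi)=v_1(\phi)$; $v_1(\phi\wedge\psi)=v_1(\phi)\wedge_\mathsf{G}v_1(\psi)$, $v_2(\phi\wedge\psi)=v_2(\phi)\vee_\mathsf{G}v_2(\psi)$; $v_1(\phi\vee\psi)=v_1(\phi)\vee_\mathsf{G}v_1(\psi)$, $v_2(\phi\vee\psi)=v_2(\phi)\wedge_\mathsf{G}v_2(\psi)$; $v_1(\phi\rightarrow\psi)=v_1(\phi)\rightarrow_\mathsf{G}v_1(\psi)$,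 $v_2(\phi\rightarrow\psi)=v_2(\psi)\ominus_\mathsf{G}v_2(\phi)$; $v_1(\phi\ominus\psi)=v_1(\phi)\ominus_\mathsf{G}v_1(\psi)$, $v_2(\phi\ominus\psi)=v_2(\psi)\rightarrow_\mathsf{G}v_2(\phi)$ (all at the same state $w$); $v_1(\Box\phi,w)=\inf\{v_1(\phi,w'):wRw'\}$, $v_2(\Box\phi,w)=\sup\{v_2(\phi,w'):wRw'\}$, $v_1(\lozenge\phi,w)=\sup\{v_1(\phi,w'):wRw'\}$, $v_2(\lozenge\phi,w)=\inf\{v_2(\phi,w'):wRw'\}$, with $\inf\varnothing=1$, $\sup\varnothing=0$. $\phi$ is $\mathbf{K}\mathsf{G}^2$ valid on a crisp frame $\mathfrak{F}$ ($\mathfrak{F}\models_{\mathbf{K}\mathsf{G}^2}\phi$) iff $v_1(\phi,w)=1$ and $v_2(\phi,w)=0$ for every $w\in\mathfrak{F}$ and every model on $\mathfrak{F}$. *)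

theory Defs
  imports Complex_Main
begin

datatype 'p fm =
    Var 'p
  | Neg "'p fm"
  | Conj "'p fm" "'p fm"
  | Disj "'p fm" "'p fm"
  | Imp "'p fm" "'p fm"
  | Coimp "'p fm" "'p fm"
  | Box "'p fm"
  | Dia "'p fm"

definition g_imp :: "real \<Rightarrow> real \<Rightarrow> real" where
  "g_imp a b = (if a \<le> b then 1 else b)"

definition g_coimp :: "real \<Rightarrow> real \<Rightarrow> real" where
  "g_coimp b a = (if b \<le> a then 0 else b)"

definition inf01 :: "real set \<Rightarrow> real" where
  "inf01 S = (if S = {} then 1 else Inf S)"

definition sup01 :: "real set \<Rightarrow> real" where
  "sup01 S = (if S = {} then 0 else Sup S)"

fun sem :: "'w set \<Rightarrow> ('w \<Rightarrow> 'w \<Rightarrow> bool) \<Rightarrow> ('p \<Rightarrow> 'w \<Rightarrow> real) \<Rightarrow> ('p \<Rightarrow> 'w \<Rightarrow> real)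
             \<Rightarrow> 'p fm \<Rightarrow> 'w \<Rightarrow> real \<times> real" where
  "sem W R e1 e2 (Var p) w = (e1 p w, e2 p w)"
| "sem W R e1 e2 (Neg a) w = (snd (sem W R e1 e2 a w), fst (sem W R e1 e2 a w))"
| "sem W R e1 e2 (Conj a b) w =
     (min (fst (sem W R e1 e2 a w)) (fst (sem W R e1 e2 b w)),
      max (snd (sem W R e1 e2 a w)) (snd (sem W R e1 e2 b w)))"
| "sem W R e1 e2 (Disj a b) w =
     (max (fst (sem W R e1 e2 a w)) (fst (sem W R e1 e2 b w)),
      min (snd (sem W R e1 e2 a w)) (snd (sem W R e1 e2 b w)))"
| "sem W R e1 e2 (Imp a b) w =
     (g_imp (fst (sem W R e1 e2 a w)) (fst (sem W R e1 e2 b w)),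
      g_coimp (snd (sem W R e1 e2 b w)) (snd (sem W R e1 e2 a w)))"
| "sem W R e1 e2 (Coimp a b) w =
     (g_coimp (fst (sem W R e1 e2 a w)) (fst (sem W R e1 e2 b w)),
      g_imp (snd (sem W R e1 e2 b w)) (snd (sem W R e1 e2 a w)))"
| "sem W R e1 e2 (Box a) w =
     (inf01 {fst (sem W R e1 e2 a u) | u. u \<in> W \<and> R w u},
      sup01 {snd (sem W R e1 e2 a u) | u. u \<in> W \<and> R w u})"
| "sem W R e1 e2 (Dia a) w =
     (sup01 {fst (sem W R e1 e2 a u) | u. u \<in> W \<and> R w u},
      inf01 {snd (sem W R e1 e2 a u) | u. u \<in> W \<and> R w u})"

definition v1 where "v1 W R e1 e2 \<phi> w = fst (sem W R e1 e2 \<phi> w)"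
definition v2 where "v2 W R e1 e2 \<phi> w = snd (sem W R e1 e2 \<phi> w)"

definition crisp_frame :: "'w set \<Rightarrow> ('w \<Rightarrow> 'w \<Rightarrow> bool) \<Rightarrow> bool" where
  "crisp_frame W R \<longleftrightarrow> (\<forall>x y. R x y \<longrightarrow> x \<in> W \<and> y \<in> W)"

definition is_model :: "'w set \<Rightarrow> ('w \<Rightarrow> 'w \<Rightarrow> bool) \<Rightarrow> ('p \<Rightarrow> 'w \<Rightarrow> real) \<Rightarrow> ('p \<Rightarrow> 'w \<Rightarrow> real) \<Rightarrow> bool" where
  "is_model W R e1 e2 \<longleftrightarrow>
     (\<forall>p. \<forall>w\<in>W. 0 \<le> e1 p w \<and> e1 p w \<le> 1 \<and> 0 \<le> e2 p w \<and> e2 p w \<le> 1)"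

definition KG2_valid :: "'w set \<Rightarrow> ('w \<Rightarrow> 'w \<Rightarrow> bool) \<Rightarrow> 'p fm \<Rightarrow> bool" where
  "KG2_valid W R \<phi> \<longleftrightarrow>
     (\<forall>e1 e2. is_model W R e1 e2 \<longrightarrow>
        (\<forall>w\<in>W. v1 W R e1 e2 \<phi> w = 1 \<and> v2 W R e1 e2 \<phi> w = 0))"

end

theory Submission
  imports Defs
begin

text \<open>Swapping the valuations to \<open>e1' = 1 - e2\<close> and \<open>e2' = 1 - e1\<close> gives another model
  in which \<open>v1'(\<phi>) = 1 - v2(\<phi>)\<close> at every state: the order-reversing involution
  \<open>x \<mapsto> 1 - x\<close> of \<open>[0,1]\<close> exchanges min and max, inf and sup, and Goedel implication
  and coimplication, which is exactly how the two valuations of each connective mirror each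
  other (all values stay in \<open>[0,1]\<close>, so the infima and suprema involved are genuine).
  Hence if \<open>v1(\<phi>) = 1\<close> in all models, then \<open>v2(\<phi>) = 0\<close> in all models.\<close>

lemma inf01_one_minus:
  fixes S :: "real set"
  assumes "bdd_above S"
  shows "inf01 ((\<lambda>x. 1 - x) ` S) = 1 - sup01 S"
proof (cases "S = {}")
  case False
  have "Inf ((\<lambda>x. 1 - x) ` S) = - (SUP x\<in>S. - 1 + x)"
    by (simp add: Inf_real_def image_image)
  also have "\<dots> = 1 - Sup S"
    using Sup_add_eq[of id S "- 1"] assms False by simp
  finally show ?thesis
    using False by (simp add: inf01_def sup01_def)
qed (simp add: inf01_def sup01_def)

lemma sup01_one_minus:
  fixes S :: "real set"
  assumes "bdd_below S"
  shows "sup01 ((\<lambda>x. 1 - x) ` S) = 1 - inf01 S"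
proof -
  from assms obtain m where "\<forall>x\<in>S. m \<le> x"
    by (auto simp: bdd_below_def)
  then have "bdd_above ((\<lambda>x. 1 - x) ` S)"
    by (intro bdd_aboveI[of _ "1 - m"]) auto
  from inf01_one_minus[OF this] show ?thesis
    by (simp add: image_image)
qed

lemma inf01_mem_unit:
  fixes S :: "real set"
  assumes "S \<subseteq> {0..1}"
  shows "inf01 S \<in> {0..1}"
proof (cases "S = {}")
  case False
  then obtain x where "x \<in> S" by blast
  moreover have "bdd_below S"
    by (rule bdd_below_mono[OF bdd_below_Icc assms])
  ultimately have "Inf S \<le> 1"
    using assms by (meson atLeastAtMost_iff cInf_lower order_trans subsetD)
  moreover have "0 \<le> Inf S"
    using False assms by (intro cInf_greatest) auto
  ultimately show ?thesis
    using False by (simp add: inf01_def)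
qed (simp add: inf01_def)

lemma sup01_mem_unit:
  fixes S :: "real set"
  assumes "S \<subseteq> {0..1}"
  shows "sup01 S \<in> {0..1}"
proof -
  have "inf01 ((\<lambda>x. 1 - x) ` S) \<in> {0..1}"
    using assms by (intro inf01_mem_unit) auto
  moreover have "inf01 ((\<lambda>x. 1 - x) ` S) = 1 - sup01 S"
    by (rule inf01_one_minus[OF bdd_above_mono[OF bdd_above_Icc assms]])
  ultimately show ?thesis
    by simp
qed

lemma sem_mem_unit:
  assumes "is_model W R e1 e2" and "w \<in> W"
  shows "fst (sem W R e1 e2 \<phi> w) \<in> {0..1} \<and> snd (sem W R e1 e2 \<phi> w) \<in> {0..1}"
  using assms(2)
proof (induction \<phi> arbitrary: w)
  case (Var p)
  then show ?case
    using assms(1) by (simp add: is_model_def)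
next
  case (Box \<phi>)
  then have "{fst (sem W R e1 e2 \<phi> u) | u. u \<in> W \<and> R w u} \<subseteq> {0..1}"
    and "{snd (sem W R e1 e2 \<phi> u) | u. u \<in> W \<and> R w u} \<subseteq> {0..1}"
    by blast+
  then show ?case
    using inf01_mem_unit sup01_mem_unit by (simp only: sem.simps fst_conv snd_conv)
next
  case (Dia \<phi>)
  then have "{fst (sem W R e1 e2 \<phi> u) | u. u \<in> W \<and> R w u} \<subseteq> {0..1}"
    and "{snd (sem W R e1 e2 \<phi> u) | u. u \<in> W \<and> R w u} \<subseteq> {0..1}"
    by blast+
  then show ?case
    using inf01_mem_unit sup01_mem_unit by (simp only: sem.simps fst_conv snd_conv)
qed (force simp: g_imp_def g_coimp_def min_def max_def)+

lemma is_model_dual: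
  assumes "is_model W R e1 e2"
  shows "is_model W R (\<lambda>p w. 1 - e2 p w) (\<lambda>p w. 1 - e1 p w)"
  using assms by (simp add: is_model_def)

lemma sem_dual:
  assumes "is_model W R e1 e2"
  shows "sem W R (\<lambda>p w. 1 - e2 p w) (\<lambda>p w. 1 - e1 p w) \<phi> w =
           (1 - snd (sem W R e1 e2 \<phi> w), 1 - fst (sem W R e1 e2 \<phi> w))"
proof (induction \<phi> arbitrary: w)
  case (Box \<phi>)
  let ?S1 = "{fst (sem W R e1 e2 \<phi> u) | u. u \<in> W \<and> R w u}"
  let ?S2 = "{snd (sem W R e1 e2 \<phi> u) | u. u \<in> W \<and> R w u}"
  have S1: "?S1 \<subseteq> {0..1}" and S2: "?S2 \<subseteq> {0..1}"
    using sem_mem_unit[OF assms] by blast+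
  have "bdd_below ?S1" and "bdd_above ?S2"
    by (rule bdd_below_mono[OF bdd_below_Icc S1], rule bdd_above_mono[OF bdd_above_Icc S2])
  moreover have "{1 - snd (sem W R e1 e2 \<phi> u) | u. u \<in> W \<and> R w u} = (\<lambda>x. 1 - x) ` ?S2"
    and "{1 - fst (sem W R e1 e2 \<phi> u) | u. u \<in> W \<and> R w u} = (\<lambda>x. 1 - x) ` ?S1"
    by auto
  ultimately show ?case
    by (simp add: Box inf01_one_minus sup01_one_minus)
next
  case (Dia \<phi>)
  let ?S1 = "{fst (sem W R e1 e2 \<phi> u) | u. u \<in> W \<and> R w u}"
  let ?S2 = "{snd (sem W R e1 e2 \<phi> u) | u. u \<in> W \<and> R w u}"
  have S1: "?S1 \<subseteq> {0..1}" and S2: "?S2 \<subseteq> {0..1}"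
    using sem_mem_unit[OF assms] by blast+
  have "bdd_above ?S1" and "bdd_below ?S2"
    by (rule bdd_above_mono[OF bdd_above_Icc S1], rule bdd_below_mono[OF bdd_below_Icc S2])
  moreover have "{1 - snd (sem W R e1 e2 \<phi> u) | u. u \<in> W \<and> R w u} = (\<lambda>x. 1 - x) ` ?S2"
    and "{1 - fst (sem W R e1 e2 \<phi> u) | u. u \<in> W \<and> R w u} = (\<lambda>x. 1 - x) ` ?S1"
    by auto
  ultimately show ?case
    by (simp add: Dia inf01_one_minus sup01_one_minus)
qed (auto simp: g_imp_def g_coimp_def)

theorem proposition1:
  fixes W :: "'w set" and R :: "'w \<Rightarrow> 'w \<Rightarrow> bool" and \<phi> :: "'p fm"
  assumes "crisp_frame W R"
  shows "KG2_valid W R \<phi> \<longleftrightarrow>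
           (\<forall>e1 e2. is_model W R e1 e2 \<longrightarrow> (\<forall>w\<in>W. v1 W R e1 e2 \<phi> w = 1))"
proof
  assume "KG2_valid W R \<phi>"
  then show "\<forall>e1 e2. is_model W R e1 e2 \<longrightarrow> (\<forall>w\<in>W. v1 W R e1 e2 \<phi> w = 1)"
    by (simp add: KG2_valid_def)
next
  assume v1_one: "\<forall>e1 e2. is_model W R e1 e2 \<longrightarrow> (\<forall>w\<in>W. v1 W R e1 e2 \<phi> w = 1)"
  show "KG2_valid W R \<phi>"
    unfolding KG2_valid_def
  proof (intro allI impI ballI conjI)
    fix e1 e2 :: "'p \<Rightarrow> 'w \<Rightarrow> real" and w
    assume model: "is_model W R e1 e2" and "w \<in> W"
    then show "v1 W R e1 e2 \<phi> w = 1"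
      using v1_one by blast
    have "v1 W R (\<lambda>p w. 1 - e2 p w) (\<lambda>p w. 1 - e1 p w) \<phi> w = 1"
      using v1_one is_model_dual[OF model] \<open>w \<in> W\<close> by blast
    then show "v2 W R e1 e2 \<phi> w = 0"
      by (simp add: v1_def v2_def sem_dual[OF model])
  qed
qed

end
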